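(* Let $r=r(n)\ge 2$ with $r=o(n^{3/8})$. Then $\Pr(\mathcal B_{3r}\mid\mathcal A_4)=1-o(1)$ as $n\to\infty$.
   Context: Random intersecting process: Let $[n]=\{1,\dots,n\}$ and $\binom{[n]}{r}$ the family of $r$-subsets of $[n]$. Choose $e_1$ uniformly at random from $\binom{[n]}{r}$. Given $\mathcal F_i=\{e_1,\dots,e_i\}$, let $\mathcal A(\mathcal F_i)=\{e\in\binom{[n]}{r}: e\notin\mathcal F_i,\ e\cap e_j\neq\emptyset \text{ for all } 1\le j\le i\}$, and choose $e_{i+1}$ uniformly at random from $\mathcal A(\mathcal F_i)$. The process halts when $\mathcal A(\mathcal F_i)=\emptyset$. A star is a collection of sets such that every pair of them has the same one-element intersection $\{x\}$ ($x$ is the kernel); a single set is a $1$-star by convention. For $i\ge1$, $\mathcal A_i$ is the event that at least $i$ edges are chosen and $\mathcal F_i$ is an $i$-star. For $i\ge3$, $\mathcal B_i$ is the event that at least $i$ edges are chosen and $\bigcap_{j=1}^i e_j\neq\emptyset$. *)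

theory Defs
  imports "HOL-Probability.Probability" "HOL-Library.Landau_Symbols"
begin

definition admissible :: "nat \<Rightarrow> nat \<Rightarrow> nat set list \<Rightarrow> nat set set" where
  "admissible n r F = {e. e \<subseteq> {1..n} \<and> card e = r \<and> e \<notin> set F \<and> (\<forall>f\<in>set F. e \<inter> f \<noteq> {})}"

definition proc_step :: "nat \<Rightarrow> nat \<Rightarrow> nat set list \<Rightarrow> nat set list pmf" where
  "proc_step n r F = (if admissible n r F = {} then return_pmf F
      else map_pmf (\<lambda>e. F @ [e]) (pmf_of_set (admissible n r F)))"

text \<open>Distribution of the final (halted) sequence (e_1,...,e_m) of the random
intersecting process. Since edges are distinct, at most (n choose r) steps occur,
so (n choose r)+1 iterations reach the halted state.\<close>
definition rip :: "nat \<Rightarrow> nat \<Rightarrow> nat set list pmf" where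
  "rip n r = ((\<lambda>p. bind_pmf p (proc_step n r)) ^^ Suc (n choose r)) (return_pmf [])"

text \<open>A list of sets is a star: all pairwise intersections equal the same singleton.
(A single set is vacuously a star.)\<close>
definition is_star :: "nat set list \<Rightarrow> bool" where
  "is_star F = (\<exists>x. \<forall>j<length F. \<forall>k<length F. j \<noteq> k \<longrightarrow> F ! j \<inter> F ! k = {x})"

definition event_A :: "nat \<Rightarrow> nat set list set" where
  "event_A i = {F. i \<le> length F \<and> is_star (take i F)}"

definition event_B :: "nat \<Rightarrow> nat set list set" where
  "event_B i = {F. i \<le> length F \<and> \<Inter> (set (take i F)) \<noteq> {}}"

definition cond_prob :: "'a pmf \<Rightarrow> 'a set \<Rightarrow> 'a set \<Rightarrow> real" where
  "cond_prob p B A = measure_pmf.prob p (B \<inter> A) / measure_pmf.prob p A"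

end

theory Submission imports Defs begin

text \<open>
Condition on A_4, so that the first four edges form a star with kernel x. As long as every
chosen edge contains x, at least C(n-1,r-1) - k admissible edges contain x, while an admissible
edge avoiding x must meet each of the four disjoint petals F!j - {x}; there are at most
(r-1)^4 C(n,r-4) such r-sets. Hence each of the first 3r steps leaves the kernel with
probability O(r^7/n^3), and a union bound over these steps bounds the failure probability by
O(r^8/n^3), which tends to 0 for r = o(n^(3/8)).
\<close>

section \<open>The process after finitely many steps\<close>

definition rip_steps :: "nat \<Rightarrow> nat \<Rightarrow> nat \<Rightarrow> nat set list pmf" where
  "rip_steps n r k = ((\<lambda>p. bind_pmf p (proc_step n r)) ^^ k) (return_pmf [])"

lemma rip_steps_0: "rip_steps n r 0 = return_pmf []"
  by (simp add: rip_steps_def)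

lemma rip_steps_Suc: "rip_steps n r (Suc k) = bind_pmf (rip_steps n r k) (proc_step n r)"
  by (simp add: rip_steps_def)

lemma rip_eq_rip_steps: "rip n r = rip_steps n r (Suc (n choose r))"
  by (simp add: rip_steps_def rip_def)

lemma finite_admissible: "finite (admissible n r F)"
  by (rule finite_subset[of _ "Pow {1..n}"]) (auto simp: admissible_def)

lemma set_pmf_proc_step:
  assumes "G \<in> set_pmf (proc_step n r F)"
  obtains "admissible n r F = {}" "G = F"
    | e where "e \<in> admissible n r F" "G = F @ [e]"
  using assms finite_admissible[of n r F] by (auto simp: proc_step_def split: if_splits)

lemma set_pmf_rip_stepsD:
  assumes "F \<in> set_pmf (rip_steps n r k)"
  shows "length F \<le> k" and "length F < k \<Longrightarrow> admissible n r F = {}"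
    and "\<And>f. f \<in> set F \<Longrightarrow> f \<subseteq> {1..n} \<and> card f = r"
proof -
  have "length F \<le> k \<and> (length F < k \<longrightarrow> admissible n r F = {})
        \<and> (\<forall>f\<in>set F. f \<subseteq> {1..n} \<and> card f = r)"
    using assms
  proof (induction k arbitrary: F)
    case 0
    then show ?case by (simp add: rip_steps_0)
  next
    case (Suc k)
    then obtain G where G: "G \<in> set_pmf (rip_steps n r k)" "F \<in> set_pmf (proc_step n r G)"
      by (auto simp: rip_steps_Suc)
    from G(2) show ?case
      by (cases rule: set_pmf_proc_step) (use Suc.IH[OF G(1)] in \<open>auto simp: admissible_def\<close>)
  qed
  then show "length F \<le> k" "length F < k \<Longrightarrow> admissible n r F = {}"
    "\<And>f. f \<in> set F \<Longrightarrow> f \<subseteq> {1..n} \<and> card f = r"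
    by auto
qed

lemma snoc_in_set_pmf_rip_steps:
  assumes "F \<in> set_pmf (rip_steps n r k)" "e \<in> admissible n r F"
  shows "F @ [e] \<in> set_pmf (rip_steps n r (Suc k))"
proof -
  have "F @ [e] \<in> set_pmf (proc_step n r F)"
    using assms(2) finite_admissible[of n r F] by (auto simp: proc_step_def)
  with assms(1) show ?thesis by (auto simp: rip_steps_Suc)
qed

lemma take_set_pmf_proc_step:
  assumes "F \<in> set_pmf (rip_steps n r k)" "G \<in> set_pmf (proc_step n r F)"
  shows "take k G = F"
  using assms(2)
proof (cases rule: set_pmf_proc_step)
  case 1
  then show ?thesis using set_pmf_rip_stepsD(1)[OF assms(1)] by simp
next
  case (2 e)
  then have "length F = k"
    using set_pmf_rip_stepsD(1,2)[OF assms(1)] by (cases "length F < k") auto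
  with 2 show ?thesis by simp
qed

lemma map_pmf_take_rip_steps:
  assumes "k \<le> m"
  shows "map_pmf (take k) (rip_steps n r m) = rip_steps n r k"
  using assms
proof (induction m rule: dec_induct)
  case base
  have "map_pmf (take k) (rip_steps n r k) = map_pmf id (rip_steps n r k)"
    by (rule map_pmf_cong) (auto dest: set_pmf_rip_stepsD(1))
  then show ?case by simp
next
  case (step m)
  have "map_pmf (take k) (proc_step n r F) = return_pmf (take k F)"
    if F: "F \<in> set_pmf (rip_steps n r m)" for F
  proof -
    have "map_pmf (take k) (proc_step n r F) = map_pmf (\<lambda>_. take k F) (proc_step n r F)"
    proof (rule map_pmf_cong)
      fix G assume "G \<in> set_pmf (proc_step n r F)"
      then have "take m G = F" by (rule take_set_pmf_proc_step[OF F])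
      with step.hyps show "take k G = take k F" by (metis min.absorb1 take_take)
    qed simp
    then show ?thesis by (simp add: map_pmf_const)
  qed
  then have "map_pmf (take k) (rip_steps n r (Suc m))
      = bind_pmf (rip_steps n r m) (\<lambda>F. return_pmf (take k F))"
    by (simp add: rip_steps_Suc map_bind_pmf cong: bind_pmf_cong)
  also have "\<dots> = map_pmf (take k) (rip_steps n r m)"
    by (simp add: map_pmf_def)
  finally show ?case using step.IH by simp
qed

lemma prob_rip_steps_prefix_event:
  assumes "k \<le> m" "\<And>F. take k F \<in> E \<longleftrightarrow> F \<in> E"
  shows "measure_pmf.prob (rip_steps n r m) E = measure_pmf.prob (rip_steps n r k) E"
proof -
  have "measure_pmf.prob (rip_steps n r k) E
      = measure_pmf.prob (map_pmf (take k) (rip_steps n r m)) E"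
    using map_pmf_take_rip_steps[OF assms(1)] by simp
  also have "\<dots> = measure_pmf.prob (rip_steps n r m) E"
    using assms(2) by (simp add: vimage_def)
  finally show ?thesis by simp
qed

lemma event_A_take: "i \<le> k \<Longrightarrow> take k F \<in> event_A i \<longleftrightarrow> F \<in> event_A i"
  by (auto simp: event_A_def min_def)

lemma event_B_take: "i \<le> k \<Longrightarrow> take k F \<in> event_B i \<longleftrightarrow> F \<in> event_B i"
  by (auto simp: event_B_def min_def)

lemma star_kernel:
  assumes "F \<in> event_A i" "2 \<le> i"
  obtains x where "\<And>j l. j < i \<Longrightarrow> l < i \<Longrightarrow> j \<noteq> l \<Longrightarrow> F ! j \<inter> F ! l = {x}"
    and "\<And>j. j < i \<Longrightarrow> x \<in> F ! j"
proof -
  from assms(1) obtain x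
    where x: "\<forall>j<length (take i F). \<forall>l<length (take i F). j \<noteq> l \<longrightarrow> take i F ! j \<inter> take i F ! l = {x}"
      and len: "i \<le> length F"
    unfolding event_A_def is_star_def by blast
  have pairwise: "F ! j \<inter> F ! l = {x}" if "j < i" "l < i" "j \<noteq> l" for j l
    using x that len by auto
  have "x \<in> F ! j" if "j < i" for j
  proof -
    have "F ! j \<inter> F ! (if j = 0 then 1 else 0) = {x}"
      using pairwise[of j "if j = 0 then 1 else 0"] that assms(2) by auto
    then show ?thesis by blast
  qed
  with pairwise that show ?thesis by blast
qed

lemma event_A_subset_event_B: "2 \<le> i \<Longrightarrow> event_A i \<subseteq> event_B i"
proof
  fix F assume F: "F \<in> event_A i" and i: "2 \<le> i"
  then obtain x where "\<And>j l. j < i \<Longrightarrow> l < i \<Longrightarrow> j \<noteq> l \<Longrightarrow> F ! j \<inter> F ! l = {x}"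
    and x: "\<And>j. j < i \<Longrightarrow> x \<in> F ! j"
    using star_kernel by blast
  from F have "i \<le> length F" by (simp add: event_A_def)
  with x have "x \<in> \<Inter> (set (take i F))" by (auto simp: in_set_conv_nth)
  with \<open>i \<le> length F\<close> show "F \<in> event_B i" by (auto simp: event_B_def)
qed

lemma star_kernel_common:
  assumes "F \<in> event_A i" "2 \<le> i" "F \<in> event_B (length F)"
  obtains x where "\<And>j l. j < i \<Longrightarrow> l < i \<Longrightarrow> j \<noteq> l \<Longrightarrow> F ! j \<inter> F ! l = {x}"
    and "\<And>f. f \<in> set F \<Longrightarrow> x \<in> f"
proof -
  obtain x where x: "\<And>j l. j < i \<Longrightarrow> l < i \<Longrightarrow> j \<noteq> l \<Longrightarrow> F ! j \<inter> F ! l = {x}"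
    and "\<And>j. j < i \<Longrightarrow> x \<in> F ! j"
    using star_kernel[OF assms(1,2)] by blast
  from assms(3) obtain y where y: "\<And>f. f \<in> set F \<Longrightarrow> y \<in> f"
    by (auto simp: event_B_def)
  have "1 < length F" using assms(1,2) by (simp add: event_A_def)
  then have "F ! 0 \<in> set F" "F ! 1 \<in> set F" by (auto intro!: nth_mem)
  then have "y \<in> F ! 0 \<inter> F ! 1" using y by blast
  moreover have "F ! 0 \<inter> F ! 1 = {x}" using x[of 0 1] assms(2) by simp
  ultimately have "y = x" by blast
  show ?thesis
  proof (rule that[OF x])
    show "x \<in> f" if "f \<in> set F" for f
      using y[OF that] \<open>y = x\<close> by simp
  qed
qed

section \<open>Counting edges\<close>

lemma card_subsets_containing:
  assumes "x \<in> A" "finite A" "1 \<le> r"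
  shows "card {e. e \<subseteq> A \<and> card e = r \<and> x \<in> e} = (card A - 1) choose (r - 1)"
proof -
  have eq: "{e. e \<subseteq> A \<and> card e = r \<and> x \<in> e} = insert x ` {R. R \<subseteq> A - {x} \<and> card R = r - 1}"
  proof (intro set_eqI iffI)
    fix e assume e: "e \<in> {e. e \<subseteq> A \<and> card e = r \<and> x \<in> e}"
    then have "finite e" using assms(2) finite_subset by blast
    with e have "e = insert x (e - {x})" "card (e - {x}) = r - 1" by auto
    with e show "e \<in> insert x ` {R. R \<subseteq> A - {x} \<and> card R = r - 1}" by blast
  next
    fix e assume "e \<in> insert x ` {R. R \<subseteq> A - {x} \<and> card R = r - 1}"
    then obtain R where R: "R \<subseteq> A - {x}" "card R = r - 1" "e = insert x R" by blast
    moreover have "finite R" "x \<notin> R" using R(1) assms(2) finite_subset by auto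
    ultimately show "e \<in> {e. e \<subseteq> A \<and> card e = r \<and> x \<in> e}" using assms by auto
  qed
  have "inj_on (insert x) {R. R \<subseteq> A - {x} \<and> card R = r - 1}"
    by (rule inj_onI) (metis Diff_insert_absorb Diff_iff insertI1 mem_Collect_eq subset_iff)
  moreover have "card {R. R \<subseteq> A - {x} \<and> card R = r - 1} = card (A - {x}) choose (r - 1)"
    using assms(2) by (intro n_subsets) simp
  ultimately show ?thesis
    using assms(1,2) by (simp add: eq card_image)
qed

text \<open>Choose one point in each of four disjoint sets of size at most r - 1 and r - 4 further
points; for r < 4 no r-set meets four disjoint sets.\<close>

definition transversal_bound :: "nat \<Rightarrow> nat \<Rightarrow> nat" where
  "transversal_bound n r = (if 4 \<le> r then (r - 1)^4 * (n choose (r - 4)) else 0)"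

lemma card_transversals_le:
  fixes s :: "nat \<Rightarrow> nat set"
  assumes s_sub: "\<And>j. j < 4 \<Longrightarrow> s j \<subseteq> {1..n}"
    and s_card: "\<And>j. j < 4 \<Longrightarrow> card (s j) \<le> r - 1"
    and s_disj: "\<And>j l. j < 4 \<Longrightarrow> l < 4 \<Longrightarrow> j \<noteq> l \<Longrightarrow> s j \<inter> s l = {}"
  shows "card {e. e \<subseteq> {1..n} \<and> card e = r \<and> (\<forall>j<4. e \<inter> s j \<noteq> {})} \<le> transversal_bound n r"
proof -
  define T where "T = {e. e \<subseteq> {1..n} \<and> card e = r \<and> (\<forall>j<4. e \<inter> s j \<noteq> {})}"
  define P where "P = s 0 \<times> s 1 \<times> s 2 \<times> s 3 \<times> {R. R \<subseteq> {1..n} \<and> card R = r - 4}"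
  define g where "g = (\<lambda>(a::nat, b::nat, c::nat, d::nat, R). {a, b, c, d} \<union> R)"
  have fin: "\<And>j. j < 4 \<Longrightarrow> finite (s j)" using s_sub finite_subset by blast
  have T_image: "e \<in> g ` P \<and> 4 \<le> r" if e: "e \<in> T" for e
  proof -
    have fe: "finite e" using e finite_subset unfolding T_def by blast
    have meet: "\<exists>a. a \<in> e \<and> a \<in> s j" if "j < 4" for j
      using e that unfolding T_def by blast
    obtain a b c d where abcd: "a \<in> e" "a \<in> s 0" "b \<in> e" "b \<in> s 1"
        "c \<in> e" "c \<in> s 2" "d \<in> e" "d \<in> s 3"
      using meet[of 0] meet[of 1] meet[of 2] meet[of 3] by auto
    have "a \<noteq> b" "a \<noteq> c" "a \<noteq> d" "b \<noteq> c" "b \<noteq> d" "c \<noteq> d"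
      using abcd s_disj[of 0 1] s_disj[of 0 2] s_disj[of 0 3] s_disj[of 1 2] s_disj[of 1 3]
        s_disj[of 2 3]
      by auto
    then have c4: "card {a, b, c, d} = 4" by simp
    have sub: "{a, b, c, d} \<subseteq> e" using abcd by auto
    with c4 card_mono[OF fe sub] e have r4: "4 \<le> r" unfolding T_def by simp
    define R where "R = e - {a, b, c, d}"
    have "card R = r - 4" "R \<subseteq> {1..n}"
      using card_Diff_subset[OF _ sub] c4 e unfolding R_def T_def by auto
    then have "(a, b, c, d, R) \<in> P" using abcd unfolding P_def by simp
    moreover have "e = g (a, b, c, d, R)" unfolding g_def R_def using sub by auto
    ultimately show ?thesis using r4 by blast
  qed
  show ?thesis
  proof (cases "4 \<le> r")
    case False
    with T_image have "T = {}" by blast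
    then show ?thesis unfolding T_def by (metis card.empty zero_le)
  next
    case True
    have "card T \<le> card (g ` P)"
      using T_image by (intro card_mono) (auto intro: finite_imageI simp: P_def fin)
    also have "\<dots> \<le> card P" by (rule card_image_le) (simp add: P_def fin)
    also have "card P = card (s 0) * card (s 1) * card (s 2) * card (s 3) * (n choose (r - 4))"
      unfolding P_def by (simp add: card_cartesian_product n_subsets)
    also have "\<dots> \<le> (r - 1) * (r - 1) * (r - 1) * (r - 1) * (n choose (r - 4))"
      using s_card[of 0] s_card[of 1] s_card[of 2] s_card[of 3] by (intro mult_mono) auto
    finally show ?thesis using True unfolding T_def transversal_bound_def
      by (simp add: power4_eq_xxxx)
  qed
qed

lemma card_admissible_ge:
  assumes "x \<in> {1..n}" "1 \<le> r" "\<And>f. f \<in> set F \<Longrightarrow> x \<in> f"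
  shows "((n - 1) choose (r - 1)) - length F \<le> card (admissible n r F)"
proof -
  define Through where "Through = {e. e \<subseteq> {1..n} \<and> card e = r \<and> x \<in> e}"
  have "card Through = (n - 1) choose (r - 1)"
    unfolding Through_def using card_subsets_containing[OF assms(1) _ assms(2)] by simp
  moreover have "card Through - card (set F) \<le> card (Through - set F)"
    by (rule diff_card_le_card_Diff) simp
  moreover have "card (set F) \<le> length F" by (rule card_length)
  moreover have "Through - set F \<subseteq> admissible n r F"
    using assms(3) unfolding Through_def admissible_def by auto
  then have "card (Through - set F) \<le> card (admissible n r F)"
    by (rule card_mono[OF finite_admissible])
  ultimately show ?thesis by linarith
qed

section \<open>Leaving the kernel\<close>

lemma card_admissible_avoiding_kernel_le:
  assumes len: "4 \<le> length F" and edges: "\<And>f. f \<in> set F \<Longrightarrow> f \<subseteq> {1..n} \<and> card f = r"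
    and petals: "\<And>j l. j < 4 \<Longrightarrow> l < 4 \<Longrightarrow> j \<noteq> l \<Longrightarrow> F ! j \<inter> F ! l = {x}"
  shows "card {e \<in> admissible n r F. x \<notin> e} \<le> transversal_bound n r"
proof -
  define T where "T = {e. e \<subseteq> {1..n} \<and> card e = r \<and> (\<forall>j<4. e \<inter> (F ! j - {x}) \<noteq> {})}"
  have edge: "F ! j \<subseteq> {1..n}" "card (F ! j) = r" if "j < 4" for j
    using that len edges[OF nth_mem] by auto
  have kernel: "x \<in> F ! j" if "j < 4" for j
  proof -
    have "F ! j \<inter> F ! (if j = 0 then 1 else 0) = {x}"
      using petals[of j "if j = 0 then 1 else 0"] that by auto
    then show ?thesis by blast
  qed
  have "{e \<in> admissible n r F. x \<notin> e} \<subseteq> T"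
  proof
    fix e assume e: "e \<in> {e \<in> admissible n r F. x \<notin> e}"
    have "e \<inter> (F ! j - {x}) \<noteq> {}" if "j < 4" for j
    proof -
      have "F ! j \<in> set F" using len that by (auto intro!: nth_mem)
      then have "e \<inter> F ! j \<noteq> {}" using e unfolding admissible_def by blast
      with e show ?thesis by blast
    qed
    with e show "e \<in> T" unfolding T_def admissible_def by blast
  qed
  moreover have "finite T" unfolding T_def by (rule finite_subset[of _ "Pow {1..n}"]) auto
  moreover have "card T \<le> transversal_bound n r"
    unfolding T_def
  proof (rule card_transversals_le)
    fix j :: nat assume "j < 4"
    then show "F ! j - {x} \<subseteq> {1..n}" "card (F ! j - {x}) \<le> r - 1"
      using edge kernel by auto
  next
    fix j l :: nat assume "j < 4" "l < 4" "j \<noteq> l"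
    then show "(F ! j - {x}) \<inter> (F ! l - {x}) = {}" using petals by auto
  qed
  ultimately show ?thesis by (meson card_mono order_trans)
qed

lemma prob_proc_step_leaves_event_B_le:
  assumes F: "F \<in> set_pmf (rip_steps n r k)" and k: "4 \<le> k" "k < (n - 1) choose (r - 1)"
    and FAB: "F \<in> event_A 4" "F \<in> event_B k" and r: "1 \<le> r"
  shows "measure_pmf.prob (proc_step n r F) (- event_B (Suc k))
          \<le> transversal_bound n r / (((n - 1) choose (r - 1)) - k)"
proof -
  have lenF: "length F = k"
    using set_pmf_rip_stepsD(1)[OF F] FAB(2) by (simp add: event_B_def)
  obtain x where petals: "\<And>j l. j < 4 \<Longrightarrow> l < 4 \<Longrightarrow> j \<noteq> l \<Longrightarrow> F ! j \<inter> F ! l = {x}"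
    and kernel: "\<And>f. f \<in> set F \<Longrightarrow> x \<in> f"
    using star_kernel_common[OF FAB(1) _ FAB(2)[folded lenF]] by auto
  have "F ! 0 \<in> set F" using lenF k by simp
  then have "x \<in> {1..n}" using kernel set_pmf_rip_stepsD(3)[OF F] by blast
  then have adm: "((n - 1) choose (r - 1)) - k \<le> card (admissible n r F)"
    using card_admissible_ge[OF _ r kernel] lenF by metis
  with k have ne: "admissible n r F \<noteq> {}" by auto
  have "admissible n r F \<inter> (\<lambda>e. F @ [e]) -` (- event_B (Suc k)) \<subseteq> {e \<in> admissible n r F. x \<notin> e}"
    using kernel lenF by (auto simp: event_B_def) blast
  moreover have "finite {e \<in> admissible n r F. x \<notin> e}"
    by (rule finite_subset[OF _ finite_admissible]) auto
  moreover have "card {e \<in> admissible n r F. x \<notin> e} \<le> transversal_bound n r"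
    by (rule card_admissible_avoiding_kernel_le)
      (use lenF k set_pmf_rip_stepsD(3)[OF F] petals in auto)
  ultimately have "card (admissible n r F \<inter> (\<lambda>e. F @ [e]) -` (- event_B (Suc k)))
      \<le> transversal_bound n r"
    by (meson card_mono order_trans)
  then have "measure_pmf.prob (proc_step n r F) (- event_B (Suc k))
      \<le> transversal_bound n r / card (admissible n r F)"
    using ne finite_admissible
    by (simp add: proc_step_def measure_pmf_of_set divide_right_mono)
  also have "\<dots> \<le> transversal_bound n r / (((n - 1) choose (r - 1)) - k)"
    using adm k by (intro divide_left_mono) auto
  finally show ?thesis .
qed

lemma prob_bind_pmf_le:
  fixes \<delta> :: real
  assumes "0 \<le> \<delta>" "\<And>x. x \<in> set_pmf p \<Longrightarrow> measure_pmf.prob (f x) E \<le> \<delta> * indicator S x"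
  shows "measure_pmf.prob (bind_pmf p f) E \<le> \<delta> * measure_pmf.prob p S"
proof -
  have "ennreal (measure_pmf.prob (bind_pmf p f) E) = (\<integral>\<^sup>+x. emeasure (f x) E \<partial>p)"
    by (simp add: measure_pmf.emeasure_eq_measure[symmetric])
  also have "\<dots> \<le> (\<integral>\<^sup>+x. ennreal \<delta> * indicator S x \<partial>p)"
  proof (intro nn_integral_mono_AE AE_pmfI)
    fix x assume "x \<in> set_pmf p"
    then have "emeasure (f x) E \<le> ennreal (\<delta> * indicator S x)"
      using assms(2) by (simp add: measure_pmf.emeasure_eq_measure ennreal_leI)
    then show "emeasure (f x) E \<le> ennreal \<delta> * indicator S x"
      by (cases "x \<in> S") auto
  qed
  also have "\<dots> = ennreal (\<delta> * measure_pmf.prob p S)"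
    using assms(1) by (simp add: nn_integral_cmult_indicator measure_pmf.emeasure_eq_measure ennreal_mult)
  finally show ?thesis using assms(1) by simp
qed

lemma prob_rip_steps_leaves_event_B_le:
  assumes k: "4 \<le> k" "k < (n - 1) choose (r - 1)" and r: "1 \<le> r"
  shows "measure_pmf.prob (rip_steps n r (Suc k)) (event_A 4 \<inter> event_B k - event_B (Suc k))
    \<le> transversal_bound n r / (((n - 1) choose (r - 1)) - k)
      * measure_pmf.prob (rip_steps n r k) (event_A 4 \<inter> event_B k)"
  unfolding rip_steps_Suc
proof (rule prob_bind_pmf_le)
  let ?S = "event_A 4 \<inter> event_B k"
  fix F assume F: "F \<in> set_pmf (rip_steps n r k)"
  show "measure_pmf.prob (proc_step n r F) (?S - event_B (Suc k))
    \<le> transversal_bound n r / (((n - 1) choose (r - 1)) - k) * indicator ?S F"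
  proof (cases "F \<in> ?S")
    case True
    have "measure_pmf.prob (proc_step n r F) (?S - event_B (Suc k))
        \<le> measure_pmf.prob (proc_step n r F) (- event_B (Suc k))"
      by (intro measure_pmf.finite_measure_mono) auto
    with prob_proc_step_leaves_event_B_le[OF F k _ _ r] True show ?thesis by auto
  next
    case False
    have "take k G \<in> ?S \<longleftrightarrow> G \<in> ?S" for G
      using event_A_take[OF k(1)] event_B_take[of k k] by blast
    then have "set_pmf (proc_step n r F) \<inter> (?S - event_B (Suc k)) = {}"
      using take_set_pmf_proc_step[OF F] False by blast
    then have "measure_pmf.prob (proc_step n r F) (?S - event_B (Suc k)) = 0"
      by (simp add: measure_pmf_zero_iff)
    with False show ?thesis by simp
  qed
qed simp

lemma prob_event_A_not_event_B_le:
  assumes k: "4 \<le> k" "k \<le> K" and K: "K < (n - 1) choose (r - 1)" and r: "1 \<le> r"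
  shows "measure_pmf.prob (rip_steps n r k) (event_A 4 - event_B k)
    \<le> real (k - 4) * (transversal_bound n r / (((n - 1) choose (r - 1)) - K))
      * measure_pmf.prob (rip_steps n r 4) (event_A 4)"
  using k
proof (induction k rule: dec_induct)
  case base
  have empty: "event_A 4 - event_B 4 = {}" using event_A_subset_event_B[of 4] by auto
  show ?case unfolding empty by simp
next
  case (step k)
  define \<delta> where "\<delta> = real (transversal_bound n r) / real (((n - 1) choose (r - 1)) - K)"
  define P4 where "P4 = measure_pmf.prob (rip_steps n r 4) (event_A 4)"
  let ?prob = "measure_pmf.prob (rip_steps n r (Suc k))"
  have "?prob (event_A 4 - event_B (Suc k))
     \<le> ?prob ((event_A 4 - event_B k) \<union> (event_A 4 \<inter> event_B k - event_B (Suc k)))"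
    by (intro measure_pmf.finite_measure_mono) auto
  also have "\<dots> \<le> ?prob (event_A 4 - event_B k) + ?prob (event_A 4 \<inter> event_B k - event_B (Suc k))"
    by (rule measure_Un_le) auto
  also have "?prob (event_A 4 - event_B k)
      = measure_pmf.prob (rip_steps n r k) (event_A 4 - event_B k)"
    using step.hyps event_A_take[of 4 k] event_B_take[of k k] by (intro prob_rip_steps_prefix_event) auto
  also have "\<dots> \<le> real (k - 4) * \<delta> * P4" using step.IH step.prems unfolding \<delta>_def P4_def by simp
  also have "?prob (event_A 4 \<inter> event_B k - event_B (Suc k))
     \<le> transversal_bound n r / (((n - 1) choose (r - 1)) - k)
       * measure_pmf.prob (rip_steps n r k) (event_A 4 \<inter> event_B k)"
    using step K r by (intro prob_rip_steps_leaves_event_B_le) auto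
  also have "\<dots> \<le> \<delta> * P4"
  proof (rule mult_mono)
    show "transversal_bound n r / (((n - 1) choose (r - 1)) - k) \<le> \<delta>"
      unfolding \<delta>_def using step K by (intro divide_left_mono) auto
    have "measure_pmf.prob (rip_steps n r k) (event_A 4 \<inter> event_B k)
        \<le> measure_pmf.prob (rip_steps n r k) (event_A 4)"
      by (intro measure_pmf.finite_measure_mono) auto
    also have "\<dots> = P4"
      unfolding P4_def using step.hyps event_A_take by (intro prob_rip_steps_prefix_event) auto
    finally show "measure_pmf.prob (rip_steps n r k) (event_A 4 \<inter> event_B k) \<le> P4" .
  qed (auto simp: \<delta>_def)
  also have "real (k - 4) * \<delta> * P4 + \<delta> * P4 = real (Suc k - 4) * \<delta> * P4"
    using step.hyps by (simp add: algebra_simps of_nat_diff)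
  finally show ?case unfolding \<delta>_def P4_def by simp
qed

section \<open>Stars occur with positive probability\<close>

definition star_edge :: "nat \<Rightarrow> nat \<Rightarrow> nat set" where
  "star_edge r j = insert 1 {2 + j * (r - 1) ..< 2 + Suc j * (r - 1)}"

lemma star_edge_inter: "j \<noteq> l \<Longrightarrow> star_edge r j \<inter> star_edge r l = {1}"
proof -
  have disjoint: "{2 + j * m ..< 2 + Suc j * m} \<inter> {2 + l * m ..< 2 + Suc l * m} = {}"
    if "j < l" for j l m :: nat
    using mult_le_mono1[of "Suc j" l m] that by auto
  assume "j \<noteq> l"
  then consider "j < l" | "l < j" by linarith
  then show ?thesis
    by cases (use disjoint[of j l "r - 1"] disjoint[of l j "r - 1"] in \<open>auto simp: star_edge_def\<close>)
qed

lemma star_edge_admissible: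
  assumes "2 \<le> r" "Suc k * (r - 1) + 1 \<le> n"
  shows "star_edge r k \<in> admissible n r (map (star_edge r) [0..<k])"
proof -
  have "star_edge r k \<subseteq> {1..n}" using assms(2) by (auto simp: star_edge_def)
  moreover have "card (star_edge r k) = r" using assms(1) by (simp add: star_edge_def)
  moreover have "star_edge r k \<notin> set (map (star_edge r) [0..<k])"
  proof -
    have "2 + k * (r - 1) \<in> star_edge r k" using assms(1) by (simp add: star_edge_def)
    then have neq: "star_edge r k \<noteq> star_edge r j" if "j < k" for j
      using star_edge_inter[of k j r] that by auto
    show ?thesis
    proof
      assume "star_edge r k \<in> set (map (star_edge r) [0..<k])"
      then obtain j where "j < k" "star_edge r k = star_edge r j" by auto
      with neq show False by blast
    qed
  qed
  moreover have "\<forall>f \<in> set (map (star_edge r) [0..<k]). star_edge r k \<inter> f \<noteq> {}"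
    by (auto simp: star_edge_def)
  ultimately show ?thesis unfolding admissible_def by blast
qed

lemma star_edges_in_set_pmf_rip_steps:
  assumes "2 \<le> r" "k * (r - 1) + 1 \<le> n"
  shows "map (star_edge r) [0..<k] \<in> set_pmf (rip_steps n r k)"
  using assms(2)
proof (induction k)
  case 0
  then show ?case by (simp add: rip_steps_0)
next
  case (Suc k)
  have "k * (r - 1) \<le> Suc k * (r - 1)" by simp
  with Suc have "map (star_edge r) [0..<k] @ [star_edge r k] \<in> set_pmf (rip_steps n r (Suc k))"
    by (intro snoc_in_set_pmf_rip_steps star_edge_admissible assms(1)) auto
  then show ?case by simp
qed

lemma prob_event_A_pos:
  assumes "2 \<le> r" "i * (r - 1) + 1 \<le> n"
  shows "measure_pmf.prob (rip_steps n r i) (event_A i) > 0"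
proof (rule measure_pmf_posI)
  show "map (star_edge r) [0..<i] \<in> set_pmf (rip_steps n r i)"
    by (rule star_edges_in_set_pmf_rip_steps[OF assms])
  have "is_star (map (star_edge r) [0..<i])"
    unfolding is_star_def using star_edge_inter by (intro exI[of _ 1]) auto
  then show "map (star_edge r) [0..<i] \<in> event_A i" by (simp add: event_A_def)
qed

section \<open>Binomial estimates\<close>

lemma le_binomial: "1 \<le> k \<Longrightarrow> k < m \<Longrightarrow> m \<le> m choose k"
proof (induction m arbitrary: k)
  case 0
  then show ?case by simp
next
  case (Suc m)
  then obtain j where j: "k = Suc j" by (cases k) auto
  show ?case
  proof (cases "j = 0")
    case True
    then show ?thesis using j by simp
  next
    case False
    then have "m \<le> m choose j" using Suc.IH[of j] Suc.prems j by simp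
    moreover have "0 < m choose Suc j" using Suc.prems j by simp
    moreover have "Suc m choose k = (m choose j) + (m choose Suc j)" using j by simp
    ultimately show ?thesis by linarith
  qed
qed

lemma binomial_mult_pow_le:
  "j + i \<le> r \<Longrightarrow> r \<le> n \<Longrightarrow> (n choose j) * (n - r)^i \<le> (n choose (j + i)) * r^i"
proof (induction i)
  case 0
  then show ?case by simp
next
  case (Suc i)
  have "(n choose j) * (n - r)^Suc i = ((n choose j) * (n - r)^i) * (n - r)" by simp
  also have "\<dots> \<le> ((n choose (j + i)) * r^i) * (n - (j + i))"
    by (rule mult_mono) (use Suc in auto)
  also have "(n - (j + i)) * (n choose (j + i)) = Suc (j + i) * (n choose Suc (j + i))"
    using binomial_absorb_comp[of n "j + i"] binomial_absorption[of "j + i" n] by simp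
  then have "((n choose (j + i)) * r^i) * (n - (j + i)) = r^i * (Suc (j + i) * (n choose Suc (j + i)))"
    by (simp add: mult_ac)
  also have "\<dots> \<le> r^i * (r * (n choose Suc (j + i)))"
    using Suc.prems by (intro mult_le_mono2 mult_le_mono1) auto
  finally show ?case by (simp add: mult_ac)
qed

lemma transversal_bound_le: "r \<le> n \<Longrightarrow> transversal_bound n r * (n - r)^4 \<le> (n choose r) * r^8"
proof (cases "4 \<le> r")
  case True
  assume "r \<le> n"
  have "transversal_bound n r * (n - r)^4 = (r - 1)^4 * ((n choose (r - 4)) * (n - r)^4)"
    using True by (simp add: transversal_bound_def)
  also have "\<dots> \<le> r^4 * ((n choose (r - 4 + 4)) * r^4)"
    by (intro mult_mono power_mono binomial_mult_pow_le) (use True \<open>r \<le> n\<close> in auto)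
  also have "\<dots> = (n choose r) * r^8"
    using True by (simp add: power_add[symmetric] mult_ac)
  finally show ?thesis .
qed (simp add: transversal_bound_def)

lemma transversal_ratio_le:
  assumes r: "2 \<le> r" and rn: "2 * r \<le> n" and D: "6 * r \<le> (n - 1) choose (r - 1)"
  shows "real (3 * r) * (transversal_bound n r / (((n - 1) choose (r - 1)) - 3 * r))
    \<le> 96 * real r ^ 8 / real n ^ 3"
proof -
  define D where "D = (n - 1) choose (r - 1)"
  define b where "b = real (transversal_bound n r)"
  define C where "C = real (n choose r)"
  have Cpos: "C > 0" and npos: "real n > 0" and b0: "b \<ge> 0"
    using rn r unfolding C_def b_def by auto
  have b_le: "b * (real n - real r)^4 \<le> C * real r ^ 8"
  proof -
    have "real (transversal_bound n r * (n - r)^4) \<le> real ((n choose r) * r^8)"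
      using transversal_bound_le[of r n] rn by (intro of_nat_mono) simp
    then show ?thesis unfolding b_def C_def using rn by (simp add: of_nat_diff)
  qed
  have "r * (n choose r) = n * D"
    unfolding D_def using r by (intro times_binomial_minus1_eq) simp
  then have DC: "real D * real n = C * real r"
    unfolding C_def by (metis of_nat_mult mult.commute)
  have Dpos: "real D > 0" using D r unfolding D_def by linarith
  have half: "real (D - 3 * r) \<ge> real D / 2" using D unfolding D_def by (simp add: of_nat_diff)
  have "real (3 * r) * (b / real (D - 3 * r)) \<le> real (3 * r) * (b / (real D / 2))"
    using half Dpos b0 by (intro mult_left_mono divide_left_mono) auto
  also have "\<dots> = 6 * b * real n * real r / (real D * real n)"
    using npos Dpos by (simp add: field_simps)
  also have "\<dots> = 6 * b * real n / C" unfolding DC using r Cpos by (simp add: field_simps)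
  also have "\<dots> \<le> 96 * real r ^ 8 / real n ^ 3"
  proof -
    have "(real n / 2)^4 \<le> (real n - real r)^4" using rn npos by (intro power_mono) auto
    then have "b * (real n / 2)^4 \<le> C * real r ^ 8"
      using b_le b0 mult_left_mono order_trans by blast
    then have "6 * b * real n * real n ^ 3 \<le> 96 * real r ^ 8 * C"
      by (simp add: field_simps power4_eq_xxxx power3_eq_cube)
    then show ?thesis using Cpos npos by (simp add: divide_le_eq le_divide_eq field_simps)
  qed
  finally show ?thesis unfolding b_def D_def .
qed

lemma cond_prob_le_1: "cond_prob p B A \<le> 1"
proof -
  have le: "measure_pmf.prob p (B \<inter> A) \<le> measure_pmf.prob p A"
    by (intro measure_pmf.finite_measure_mono) auto
  show ?thesis
  proof (cases "measure_pmf.prob p A = 0")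
    case False
    then have "measure_pmf.prob p A > 0" using measure_nonneg[of p A] by linarith
    with le show ?thesis by (simp add: cond_prob_def)
  qed (simp add: cond_prob_def)
qed

lemma cond_prob_eq_1_minus:
  assumes "measure_pmf.prob p A > 0"
  shows "cond_prob p B A = 1 - measure_pmf.prob p (A - B) / measure_pmf.prob p A"
proof -
  have "measure_pmf.prob p (B \<inter> A) = measure_pmf.prob p A - measure_pmf.prob p (A - B)"
    using measure_pmf.finite_measure_Diff'[of A p B] by (simp add: Int_commute)
  then show ?thesis using assms by (simp add: cond_prob_def field_simps)
qed

lemma cond_prob_event_B_event_A_ge:
  assumes r: "2 \<le> r" and n: "4 * (r - 1) + 1 \<le> n" and D: "6 * r \<le> (n - 1) choose (r - 1)"
  shows "1 - real (3 * r) * (transversal_bound n r / (((n - 1) choose (r - 1)) - 3 * r))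
    \<le> cond_prob (rip n r) (event_B (3 * r)) (event_A 4)"
proof -
  define K where "K = 3 * r"
  define \<delta> where "\<delta> = real (transversal_bound n r) / real (((n - 1) choose (r - 1)) - K)"
  define P4 where "P4 = measure_pmf.prob (rip_steps n r 4) (event_A 4)"
  have K: "4 \<le> K" "K < (n - 1) choose (r - 1)" using r D unfolding K_def by auto
  have "(n - 1) choose (r - 1) \<le> n choose r"
    using n r binomial_Suc_Suc[of "n - 1" "r - 1"] by simp
  then have K_le: "K \<le> Suc (n choose r)" using K by linarith
  have P4: "P4 > 0" unfolding P4_def using prob_event_A_pos[OF r] n by simp
  have prob_A: "measure_pmf.prob (rip n r) (event_A 4) = P4"
    unfolding rip_eq_rip_steps P4_def using K K_le event_A_take
    by (intro prob_rip_steps_prefix_event) auto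
  have "measure_pmf.prob (rip n r) (event_A 4 - event_B K)
      = measure_pmf.prob (rip_steps n r K) (event_A 4 - event_B K)"
    unfolding rip_eq_rip_steps using K K_le event_A_take[of 4 K] event_B_take[of K K]
    by (intro prob_rip_steps_prefix_event) auto
  also have "\<dots> \<le> real (K - 4) * \<delta> * P4"
    unfolding \<delta>_def P4_def using K r by (intro prob_event_A_not_event_B_le) auto
  also have "\<dots> \<le> real K * \<delta> * P4"
    using P4 by (intro mult_right_mono) (auto simp: \<delta>_def)
  finally have "measure_pmf.prob (rip n r) (event_A 4 - event_B K) / P4 \<le> real K * \<delta>"
    using P4 by (simp add: divide_le_eq)
  then show ?thesis
    using cond_prob_eq_1_minus[of "rip n r" "event_A 4" "event_B K"] P4 prob_A
    unfolding K_def \<delta>_def by simp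
qed

lemma cond_prob_event_B_event_A_ge_power:
  assumes r: "2 \<le> r" and n: "10 * r < n"
  shows "1 - 96 * (real r ^ 8 / real n ^ 3) \<le> cond_prob (rip n r) (event_B (3 * r)) (event_A 4)"
proof -
  have "n - 1 \<le> (n - 1) choose (r - 1)" using r n by (intro le_binomial) auto
  then have D: "6 * r \<le> (n - 1) choose (r - 1)" using n by linarith
  have "real (3 * r) * (transversal_bound n r / (((n - 1) choose (r - 1)) - 3 * r))
      \<le> 96 * real r ^ 8 / real n ^ 3"
    using n by (intro transversal_ratio_le[OF r _ D]) simp
  moreover have "1 - real (3 * r) * (transversal_bound n r / (((n - 1) choose (r - 1)) - 3 * r))
      \<le> cond_prob (rip n r) (event_B (3 * r)) (event_A 4)"
    using n by (intro cond_prob_event_B_event_A_ge[OF r _ D]) simp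
  ultimately show ?thesis by simp
qed

lemma power8_div_cube_tendsto_0:
  fixes f :: "nat \<Rightarrow> real"
  assumes "f \<in> o(\<lambda>n. real n powr (3/8))"
  shows "(\<lambda>n. f n ^ 8 / real n ^ 3) \<longlonglongrightarrow> 0"
proof -
  have "(\<lambda>n. f n ^ 8) \<in> o(\<lambda>n. (real n powr (3/8)) ^ 8)"
    by (rule landau_o.small_power[OF assms]) simp
  then have lim: "(\<lambda>n. f n ^ 8 / (real n powr (3/8)) ^ 8) \<longlonglongrightarrow> 0"
    by (rule smalloD_tendsto)
  have "(real n powr (3/8)) ^ 8 = real n ^ 3" for n
    by (cases "n = 0") (simp_all add: powr_power powr_realpow)
  with lim show ?thesis by simp
qed

lemma ten_mult_less_if_power8_div_cube_small:
  assumes "0 < n" "real r ^ 8 / real n ^ 3 < 1 / 10^8"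
  shows "10 * r < n"
proof -
  have "(real r * 10) ^ 8 < real n ^ 3" using assms by (simp add: field_simps)
  also have "\<dots> \<le> real n ^ 8" using assms(1) by (intro power_increasing) auto
  finally have "real r * 10 < real n" by (rule power_less_imp_less_base) simp
  then show ?thesis by linarith
qed

theorem lemma5:
  fixes r :: "nat \<Rightarrow> nat"
  assumes "\<forall>n. 2 \<le> r n"
    and "(\<lambda>n. real (r n)) \<in> o(\<lambda>n. real n powr (3/8))"
  shows "(\<lambda>n. cond_prob (rip n (r n)) (event_B (3 * r n)) (event_A 4)) \<longlonglongrightarrow> 1"
proof -
  define \<epsilon> where "\<epsilon> n = real (r n) ^ 8 / real n ^ 3" for n
  have \<epsilon>: "\<epsilon> \<longlonglongrightarrow> 0" unfolding \<epsilon>_def using assms(2) by (rule power8_div_cube_tendsto_0)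
  then have "\<forall>\<^sub>F n in sequentially. \<epsilon> n < 1 / 10^8" by (rule order_tendstoD) simp
  with eventually_gt_at_top[of 0] have "\<forall>\<^sub>F n in sequentially. 10 * r n < n"
    by eventually_elim (rule ten_mult_less_if_power8_div_cube_small, unfold \<epsilon>_def)
  then have lower: "\<forall>\<^sub>F n in sequentially.
      1 - 96 * \<epsilon> n \<le> cond_prob (rip n (r n)) (event_B (3 * r n)) (event_A 4)"
    by eventually_elim (unfold \<epsilon>_def, rule cond_prob_event_B_event_A_ge_power, use assms(1) in auto)
  have upper: "\<forall>\<^sub>F n in sequentially. cond_prob (rip n (r n)) (event_B (3 * r n)) (event_A 4) \<le> 1"
    by (intro always_eventually allI cond_prob_le_1)
  have "(\<lambda>n. 1 - 96 * \<epsilon> n) \<longlonglongrightarrow> 1 - 96 * 0"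
    by (intro tendsto_intros \<epsilon>)
  then show ?thesis
    using tendsto_sandwich[OF lower upper _ tendsto_const] by simp
qed

end
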